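(* Let $\boldsymbol X \in \mathbb{R}^{n\times d}$, $\boldsymbol y \in \mathbb{R}^n$, $\boldsymbol M = \boldsymbol X^\top \boldsymbol X$, $\boldsymbol r = \boldsymbol X^\top \boldsymbol y$. Assume (A1) $\boldsymbol r > \mathbf 0$ and (A2) $M_{ij}\le 0$ for all $i\neq j$. Let $\boldsymbol C>\mathbf 0$, $\boldsymbol k>\mathbf 0$ in $\mathbb{R}^d$, and for $\varepsilon>0$ let $\boldsymbol\theta^{(\varepsilon)}(t)$ solve $$\frac{\mathrm d \theta_i}{\mathrm d t} = \theta_i\Big(r_i - \sum_{j=1}^d M_{ij}\theta_j\Big),\quad i=1,\dots,d,$$ with $\boldsymbol\theta^{(\varepsilon)}(0) = (C_1\varepsilon^{k_1},\dots,C_d\varepsilon^{k_d})$. Then there exists $B>0$ such that $\Vert\boldsymbol\theta^{(\varepsilon)}(t)\Vert\le B$ for all $\varepsilon\in(0,1]$ and all $t\ge 0$.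
   Context: Vector inequalities are coordinatewise; $\Vert\cdot\Vert$ is the Euclidean norm. *)

theory Defs
  imports "HOL-Analysis.Analysis"
begin

end

theory Submission
  imports Defs
begin

text \<open>
  For symmetric \<open>M\<close> the Lotka--Volterra field \<open>\<theta>\<^sub>i (r - M \<theta>)\<^sub>i\<close> is a gradient field
  for the potential \<open>P(\<theta>) = r\<bullet>\<theta> - \<theta>\<bullet>M\<theta>/2\<close> with respect to a metric weighted by \<open>\<theta>\<close>:
  along trajectories \<open>dP/dt = \<Sum>\<^sub>i \<theta>\<^sub>i (r - M\<theta>)\<^sub>i\<^sup>2 \<ge> 0\<close>, because the flow keeps
  every coordinate positive. For \<open>M = X\<^sup>TX\<close> the quadratic part is \<open>|X\<theta>|\<^sup>2\<close>, and
  \<open>r = X\<^sup>Ty > 0\<close> rules out nonzero nonnegative vectors in the kernel of \<open>X\<close>, so by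
  compactness \<open>|X\<theta>| \<ge> \<delta>|\<theta>|\<close> on the orthant. Hence
  \<open>\<delta>\<^sup>2|\<theta>(t)|\<^sup>2 \<le> 2 r\<bullet>\<theta>(t) - 2P(\<theta>(0)) \<le> 2|r||\<theta>(t)| + |X\<theta>(0)|\<^sup>2\<close>, and the initial values
  are bounded by \<open>|C|\<close> uniformly in \<open>\<epsilon>\<close>.
\<close>

definition lotka_volterra :: "real ^ 'd ^ 'd \<Rightarrow> real ^ 'd \<Rightarrow> real ^ 'd \<Rightarrow> real ^ 'd" where
  "lotka_volterra M r x = (\<chi> i. x $ i * (r - M *v x) $ i)"

definition lotka_volterra_potential :: "real ^ 'd ^ 'd \<Rightarrow> real ^ 'd \<Rightarrow> real ^ 'd \<Rightarrow> real" where
  "lotka_volterra_potential M r x = r \<bullet> x - x \<bullet> (M *v x) / 2"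

lemma linear_bounded_below_on_orthant:
  fixes f :: "real ^ 'd \<Rightarrow> 'b::real_normed_vector"
  assumes "linear f" and nonzero: "\<And>v. \<forall>i. 0 \<le> v $ i \<Longrightarrow> v \<noteq> 0 \<Longrightarrow> f v \<noteq> 0"
  shows "\<exists>\<delta>>0. \<forall>v. (\<forall>i. 0 \<le> v $ i) \<longrightarrow> \<delta> * norm v \<le> norm (f v)"
proof -
  define S where "S = {v::real^'d. (\<forall>i. 0 \<le> v $ i) \<and> norm v = 1}"
  have "closed S"
    unfolding S_def
    by (intro closed_Collect_conj closed_Collect_all closed_Collect_le closed_Collect_eq
        continuous_intros)
  moreover have "bounded S"
    unfolding S_def bounded_iff by auto
  ultimately have "compact S"
    by (simp add: compact_eq_bounded_closed)
  moreover have "axis i 1 \<in> S" for i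
    unfolding S_def by (simp add: axis_def norm_axis_1[unfolded axis_def])
  moreover have "continuous_on S (\<lambda>v. norm (f v))"
    using \<open>linear f\<close> by (intro continuous_intros linear_continuous_on) (simp add: linear_conv_bounded_linear)
  ultimately obtain v0 where v0: "v0 \<in> S" and min: "\<And>w. w \<in> S \<Longrightarrow> norm (f v0) \<le> norm (f w)"
    using continuous_attains_inf by (metis empty_iff)
  have "norm (f v0) > 0"
    using nonzero[of v0] v0 unfolding S_def by force
  moreover have "norm (f v0) * norm v \<le> norm (f v)" if "\<forall>i. 0 \<le> v $ i" for v
  proof (cases "v = 0")
    case False
    then have "(1 / norm v) *\<^sub>R v \<in> S"
      unfolding S_def using that by auto
    then have "norm (f v0) \<le> norm (f v) / norm v"
      using min linear_scale[OF \<open>linear f\<close>] by fastforce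
    then show ?thesis
      using False by (simp add: field_simps)
  qed simp
  ultimately show ?thesis by blast
qed

lemma gram_nonzero_on_orthant:
  fixes X :: "real ^ 'd ^ 'n" and y :: "real ^ 'n"
  assumes "\<forall>i. (transpose X *v y) $ i > 0" and "\<forall>i. 0 \<le> v $ i" and "v \<noteq> 0"
  shows "X *v v \<noteq> 0"
proof
  assume "X *v v = 0"
  then have "(transpose X *v y) \<bullet> v = 0"
    by (metis dot_lmul_matrix inner_zero_right transpose_matrix_vector transpose_transpose)
  moreover obtain j where "v $ j \<noteq> 0"
    using \<open>v \<noteq> 0\<close> by (auto simp: vec_eq_iff)
  then have "(transpose X *v y) \<bullet> v > 0"
    unfolding inner_vec_def using assms(1,2)
    by (intro sum_pos2[of UNIV j]) (auto simp: less_le)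
  ultimately show False by simp
qed

lemma gram_bounded_below_on_orthant:
  fixes X :: "real ^ 'd ^ 'n" and y :: "real ^ 'n"
  assumes "\<forall>i. (transpose X *v y) $ i > 0"
  shows "\<exists>\<delta>>0. \<forall>v. (\<forall>i. 0 \<le> v $ i) \<longrightarrow> \<delta> * norm v \<le> norm (X *v v)"
  using assms by (intro linear_bounded_below_on_orthant matrix_vector_mul_linear gram_nonzero_on_orthant)

lemma norm_powr_scaled_le:
  fixes C k :: "real ^ 'd"
  assumes "0 \<le> \<epsilon>" and "\<epsilon> \<le> 1" and "\<forall>i. 0 \<le> k $ i"
  shows "norm (\<chi> i. C $ i * \<epsilon> powr (k $ i)) \<le> norm C"
proof (rule norm_le_componentwise_cart)
  fix i
  have "\<epsilon> powr (k $ i) \<le> 1"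
    using assms by (simp add: powr_le1)
  then show "norm ((\<chi> i. C $ i * \<epsilon> powr (k $ i)) $ i) \<le> norm (C $ i)"
    by (simp add: abs_mult mult_left_le)
qed

lemma linear_ode_solution_pos:
  fixes u g :: "real \<Rightarrow> real"
  assumes g: "continuous_on {a..b} g"
    and u: "\<And>s. s \<in> {a..b} \<Longrightarrow> (u has_real_derivative u s * g s) (at s within {a..b})"
    and "u a > 0" and "a \<le> b"
  shows "u b > 0"
proof -
  define \<phi> where "\<phi> s = u s * exp (- integral {a..s} g)" for s
  have "(\<phi> has_real_derivative 0) (at s within {a..b})" if s: "s \<in> {a..b}" for s
  proof -
    have "(\<phi> has_real_derivative
        u s * g s * exp (- integral {a..s} g) + u s * (exp (- integral {a..s} g) * - g s))
        (at s within {a..b})"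
      unfolding \<phi>_def using integral_has_real_derivative[OF g s] u[OF s]
      by (auto intro!: derivative_eq_intros)
    then show ?thesis by (simp add: algebra_simps)
  qed
  then have "\<phi> b = \<phi> a"
    using has_field_derivative_zero_constant[of "{a..b}" \<phi>] \<open>a \<le> b\<close> by fastforce
  then have "\<phi> b > 0"
    using \<open>u a > 0\<close> by (simp add: \<phi>_def)
  then show ?thesis
    by (simp add: \<phi>_def zero_less_mult_iff)
qed

lemma lotka_volterra_pos:
  fixes f :: "real \<Rightarrow> real ^ 'd"
  assumes ode: "\<And>t. t \<ge> 0 \<Longrightarrow>
      (f has_vector_derivative lotka_volterra M r (f t)) (at t within {0..})"
    and "f 0 $ i > 0" and "t \<ge> 0"
  shows "f t $ i > 0"
proof (rule linear_ode_solution_pos[where u = "\<lambda>s. f s $ i" and g = "\<lambda>s. (r - M *v f s) $ i"])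
  have ode': "(f has_vector_derivative lotka_volterra M r (f s)) (at s within {0..t})"
    if "s \<in> {0..t}" for s
    using ode[of s] that by (auto intro: has_vector_derivative_within_subset)
  then have "continuous_on {0..t} f"
    by (rule continuous_on_vector_derivative)
  then have "continuous_on {0..t} (\<lambda>s. M *v f s)"
    using continuous_on_compose matrix_vector_mult_linear_continuous_on unfolding o_def by blast
  then show "continuous_on {0..t} (\<lambda>s. (r - M *v f s) $ i)"
    by (intro continuous_intros)
  show "((\<lambda>s. f s $ i) has_real_derivative f s $ i * (r - M *v f s) $ i) (at s within {0..t})"
    if "s \<in> {0..t}" for s
    using bounded_linear.has_vector_derivative[OF bounded_linear_vec_nth ode'[OF that], of i]
    by (simp add: has_real_derivative_iff_has_vector_derivative lotka_volterra_def)
qed (use assms in auto)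

lemma lotka_volterra_potential_has_derivative:
  fixes M :: "real ^ 'd ^ 'd"
  assumes "transpose M = M" and "(f has_vector_derivative f') (at s within S)"
  shows "((\<lambda>s. lotka_volterra_potential M r (f s)) has_real_derivative (r - M *v f s) \<bullet> f')
    (at s within S)"
proof -
  have "f s \<bullet> (M *v f') = (M *v f s) \<bullet> f'"
    by (metis assms(1) dot_lmul_matrix inner_commute transpose_matrix_vector)
  moreover have "((\<lambda>s. r \<bullet> f s) has_real_derivative r \<bullet> f') (at s within S)"
    using bounded_linear.has_vector_derivative[OF bounded_linear_inner_right assms(2)]
    by (simp add: has_real_derivative_iff_has_vector_derivative)
  moreover have "((\<lambda>s. f s \<bullet> (M *v f s)) has_real_derivative
      f s \<bullet> (M *v f') + f' \<bullet> (M *v f s)) (at s within S)"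
    using bounded_bilinear.has_vector_derivative[OF bounded_bilinear_inner assms(2)
        bounded_linear.has_vector_derivative[OF matrix_vector_mul_bounded_linear assms(2)]]
    by (simp add: has_real_derivative_iff_has_vector_derivative)
  ultimately have "((\<lambda>s. lotka_volterra_potential M r (f s)) has_real_derivative
      r \<bullet> f' - ((M *v f s) \<bullet> f' + f' \<bullet> (M *v f s)) / 2) (at s within S)"
    unfolding lotka_volterra_potential_def by (auto intro!: derivative_eq_intros)
  then show ?thesis
    by (simp add: inner_diff_left inner_diff_right inner_commute)
qed

lemma lotka_volterra_potential_mono:
  fixes f :: "real \<Rightarrow> real ^ 'd" and M :: "real ^ 'd ^ 'd"
  assumes "transpose M = M"
    and ode: "\<And>t. t \<ge> 0 \<Longrightarrow>
      (f has_vector_derivative lotka_volterra M r (f t)) (at t within {0..})"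
    and nonneg: "\<And>t i. t \<ge> 0 \<Longrightarrow> 0 \<le> f t $ i" and "0 \<le> t"
  shows "lotka_volterra_potential M r (f 0) \<le> lotka_volterra_potential M r (f t)"
proof -
  define P where "P s = lotka_volterra_potential M r (f s)" for s
  define P' where "P' s = (r - M *v f s) \<bullet> lotka_volterra M r (f s)" for s
  have "(P has_real_derivative P' s) (at s within {0..t})" if "s \<in> {0..t}" for s
    unfolding P_def P'_def using that
    by (intro lotka_volterra_potential_has_derivative assms(1) has_vector_derivative_within_subset[OF ode])
      auto
  then obtain s where s: "s \<in> {0..t}" and "P t - P 0 = P' s * t"
    using mvt_very_simple[of 0 t P "\<lambda>s h. P' s * h"] \<open>0 \<le> t\<close>
    by (auto simp: has_field_derivative_def)
  moreover have "P' s = (\<Sum>i\<in>UNIV. f s $ i * ((r - M *v f s) $ i)\<^sup>2)"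
    unfolding P'_def lotka_volterra_def inner_vec_def
    by (simp add: power2_eq_square algebra_simps)
  then have "P' s \<ge> 0"
    using nonneg s by (simp add: sum_nonneg)
  ultimately have "P 0 \<le> P t"
    using \<open>0 \<le> t\<close> by (metis diff_ge_0_iff_ge mult_nonneg_nonneg)
  then show ?thesis
    unfolding P_def .
qed

lemma gram_potential:
  fixes X :: "real ^ 'd ^ 'n"
  shows "x \<bullet> ((transpose X ** X) *v x) = (norm (X *v x))\<^sup>2"
proof -
  have "x \<bullet> ((transpose X ** X) *v x) = x \<bullet> (transpose X *v (X *v x))"
    by (simp add: matrix_vector_mul_assoc)
  also have "\<dots> = (X *v x) \<bullet> (X *v x)"
    by (metis dot_lmul_matrix transpose_matrix_vector transpose_transpose)
  finally show ?thesis
    by (simp add: power2_norm_eq_inner)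
qed

lemma gram_lotka_volterra_bound:
  fixes X :: "real ^ 'd ^ 'n" and y :: "real ^ 'n" and f :: "real \<Rightarrow> real ^ 'd"
  defines "M \<equiv> transpose X ** X" and "r \<equiv> transpose X *v y"
  assumes rpos: "\<forall>i. r $ i > 0"
    and ode: "\<And>t. t \<ge> 0 \<Longrightarrow>
      (f has_vector_derivative lotka_volterra M r (f t)) (at t within {0..})"
    and pos0: "\<forall>i. f 0 $ i > 0" and "0 \<le> t"
  shows "(norm (X *v f t))\<^sup>2 \<le> 2 * norm r * norm (f t) + (norm (X *v f 0))\<^sup>2"
proof -
  have pos: "f s $ i > 0" if "s \<ge> 0" for s i
    using lotka_volterra_pos[OF ode] pos0 that by blast
  have potential: "lotka_volterra_potential M r x = r \<bullet> x - (norm (X *v x))\<^sup>2 / 2" for x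
    unfolding lotka_volterra_potential_def M_def gram_potential ..
  have "transpose M = M"
    unfolding M_def by (simp add: matrix_transpose_mul)
  then have "lotka_volterra_potential M r (f 0) \<le> lotka_volterra_potential M r (f t)"
    using pos \<open>0 \<le> t\<close> by (intro lotka_volterra_potential_mono[OF _ ode]) (auto intro: less_imp_le)
  moreover have "r \<bullet> f 0 \<ge> 0"
    unfolding inner_vec_def using rpos pos0 by (intro sum_nonneg) (simp add: less_imp_le)
  moreover have "r \<bullet> f t \<le> norm r * norm (f t)"
    by (rule norm_cauchy_schwarz)
  ultimately show ?thesis
    unfolding potential by simp
qed

lemma le_max_one_if_quadratic_le:
  fixes a b c s :: real
  assumes "0 < a" and "0 \<le> c" and "a * s\<^sup>2 \<le> b * s + c"
  shows "s \<le> max 1 ((b + c) / a)"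
proof (cases "s \<le> 1")
  case False
  then have "a * s * s \<le> (b + c) * s"
    using assms mult_left_mono[of 1 s c] by (simp add: power2_eq_square algebra_simps)
  then have "a * s \<le> b + c"
    using False by simp
  then have "s \<le> (b + c) / a"
    using \<open>0 < a\<close> by (simp add: pos_le_divide_eq mult.commute)
  then show ?thesis
    by simp
qed simp

theorem lemma2:
  fixes X :: "real ^ 'd ^ 'n" and y :: "real ^ 'n"
    and C k :: "real ^ 'd"
    and theta :: "real \<Rightarrow> real \<Rightarrow> real ^ 'd"
  defines "M \<equiv> transpose X ** X" and "r \<equiv> transpose X *v y"
  assumes A1: "\<forall>i. r $ i > 0"
    and A2: "\<forall>i j. i \<noteq> j \<longrightarrow> M $ i $ j \<le> 0"
    and Cpos: "\<forall>i. C $ i > 0" and kpos: "\<forall>i. k $ i > 0"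
    and ode: "\<And>\<epsilon> t. \<epsilon> \<in> {0<..1} \<Longrightarrow> t \<ge> 0 \<Longrightarrow>
        (theta \<epsilon> has_vector_derivative
           (\<chi> i. theta \<epsilon> t $ i * (r $ i - (\<Sum>j\<in>UNIV. M $ i $ j * theta \<epsilon> t $ j))))
        (at t within {0..})"
    and init: "\<And>\<epsilon>. \<epsilon> \<in> {0<..1} \<Longrightarrow> theta \<epsilon> 0 = (\<chi> i. C $ i * \<epsilon> powr (k $ i))"
  shows "\<exists>B>0. \<forall>\<epsilon>\<in>{0<..1}. \<forall>t\<ge>0. norm (theta \<epsilon> t) \<le> B"
proof -
  obtain \<delta> where "\<delta> > 0"
    and coercive: "\<And>v. \<forall>i. 0 \<le> v $ i \<Longrightarrow> \<delta> * norm v \<le> norm (X *v v)"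
    using gram_bounded_below_on_orthant A1 unfolding r_def by blast
  obtain K where K: "\<And>x. norm (X *v x) \<le> norm x * K" and "K > 0"
    using bounded_linear.pos_bounded[OF matrix_vector_mul_bounded_linear] by blast
  define B where "B = max 1 ((2 * norm r + (norm C * K)\<^sup>2) / \<delta>\<^sup>2)"
  have "norm (theta \<epsilon> t) \<le> B" if \<epsilon>: "\<epsilon> \<in> {0<..1}" and "t \<ge> 0" for \<epsilon> t
  proof -
    let ?\<theta> = "theta \<epsilon>"
    have lv: "\<And>s. s \<ge> 0 \<Longrightarrow> (?\<theta> has_vector_derivative lotka_volterra M r (?\<theta> s)) (at s within {0..})"
      using ode[OF \<epsilon>] by (simp add: lotka_volterra_def matrix_vector_mult_def)
    have pos0: "\<forall>i. ?\<theta> 0 $ i > 0"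
      using init[OF \<epsilon>] Cpos \<epsilon> by simp
    have "norm (?\<theta> 0) \<le> norm C"
      unfolding init[OF \<epsilon>] using kpos \<epsilon> by (intro norm_powr_scaled_le) (auto intro: less_imp_le)
    then have "norm (X *v ?\<theta> 0) \<le> norm C * K"
      using K[of "?\<theta> 0"] \<open>K > 0\<close> by (meson mult_right_mono less_imp_le order_trans)
    moreover have "\<delta> * norm (?\<theta> t) \<le> norm (X *v ?\<theta> t)"
      using coercive lotka_volterra_pos[OF lv] pos0 \<open>t \<ge> 0\<close> by (meson less_imp_le)
    moreover have "(norm (X *v ?\<theta> t))\<^sup>2 \<le> 2 * norm r * norm (?\<theta> t) + (norm (X *v ?\<theta> 0))\<^sup>2"
      using gram_lotka_volterra_bound[of X y ?\<theta>] A1 lv pos0 \<open>t \<ge> 0\<close> unfolding M_def r_def by blast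
    ultimately have "\<delta>\<^sup>2 * (norm (?\<theta> t))\<^sup>2 \<le> 2 * norm r * norm (?\<theta> t) + (norm C * K)\<^sup>2"
      using \<open>\<delta> > 0\<close> by (smt (verit) norm_ge_zero power_mono power_mult_distrib mult_nonneg_nonneg)
    then show ?thesis
      unfolding B_def using \<open>\<delta> > 0\<close> by (intro le_max_one_if_quadratic_le) simp_all
  qed
  then show ?thesis
    unfolding B_def by (meson less_max_iff_disj zero_less_one)
qed

end
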